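(* Consider a two-player zero-sum matrix game with action sets $\mathcal{A}=\{1,\dots,m\}$ and $\mathcal{B}=\{1,\dots,n\}$, a known feature map $\phi:\mathcal{A}\times\mathcal{B}\to\mathbb{R}^d$ with $\|\phi(a,b)\|_2\le L$ for all $(a,b)$, and an unknown parameter $\theta^*\in\mathbb{R}^d$ with $\|\theta^*\|_2=1$, so that the payoff matrix is $Q(a,b)=\langle\phi(a,b),\theta^*\rangle$. Let $\tau^*>0$ and let $(\mu^*,\nu^* )$ be the quantal response equilibrium (QRE) of this game at temperature $\tau^*$. Write $X^*=X(\mu^*,\nu^* )$ and $y^*=y(\mu^*,\nu^* )$. Then the pair $(\theta^*,\tau^* )$ is uniquely identifiable from $(\mu^*,\nu^* )$, i.e. it is the unique pair $(\theta,\tau)\in\mathbb{R}^d\times(0,\infty)$ with $\|\theta\|_2=1$ and $X^*\theta=\tau y^*$, if and only if both of the following hold: (1) (Rank condition) $\operatorname{rank}(X^* )=d$; (2) (Non-uniformity condition) $y^*\neq 0$.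
   Context: For $\tau>0$ and a payoff matrix $Q\in\mathbb{R}^{m\times n}$, the entropy-regularized game is $\max_{\mu\in\Delta(\mathcal{A})}\min_{\nu\in\Delta(\mathcal{B})}\{\mu^\top Q\nu+\tau\mathcal{H}(\mu)-\tau\mathcal{H}(\nu)\}$ with Shannon entropy $\mathcal{H}(\pi)=-\sum_i\pi_i\log\pi_i$; its unique solution $(\mu^*,\nu^* )$ is the QRE, characterized by $\mu^*(a)\propto\exp(Q(a,\cdot)\nu^*/\tau)$ and $\nu^*(b)\propto\exp(-Q(\cdot,b)^\top\mu^*/\tau)$. For full-support distributions $\mu\in\Delta(\mathcal{A}),\nu\in\Delta(\mathcal{B})$ define $A(\nu)\in\mathbb{R}^{(m-1)\times d}$ with row $a-1$ (for $a=2,\dots,m$) equal to $\sum_{b'\in\mathcal{B}}\nu(b')(\phi(a,b')-\phi(1,b'))^\top$; $B(\mu)\in\mathbb{R}^{(n-1)\times d}$ with row $b-1$ (for $b=2,\dots,n$) equal to $\sum_{a'\in\mathcal{A}}\mu(a')(\phi(a',1)-\phi(a',b))^\top$; $c(\mu)\in\mathbb{R}^{m-1}$ with $c(\mu)_{a-1}=\log(\mu(a)/\mu(1))$; $d(\nu)\in\mathbb{R}^{n-1}$ with $d(\nu)_{b-1}=\log(\nu(b)/\nu(1))$. Set $X(\mu,\nu)=[A(\nu)^\top,B(\mu)^\top]^\top\in\mathbb{R}^{(m+n-2)\times d}$ and $y(\mu,\nu)=[c(\mu)^\top,d(\nu)^\top]^\top\in\mathbb{R}^{m+n-2}$. The QRE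 satisfies $X(\mu^*,\nu^* )\theta^*=\tau^*y(\mu^*,\nu^* )$. *)

theory Defs
  imports "HOL-Analysis.Analysis"
begin

text \<open>Actions are indexed A = {1..m}, B = {1..n}; vectors in R^d are real^'d.\<close>

definition payoff :: "(nat \<Rightarrow> nat \<Rightarrow> real^'d) \<Rightarrow> real^'d \<Rightarrow> nat \<Rightarrow> nat \<Rightarrow> real" where
  "payoff phi \<theta> a b = phi a b \<bullet> \<theta>"

definition is_QRE :: "nat \<Rightarrow> nat \<Rightarrow> (nat \<Rightarrow> nat \<Rightarrow> real) \<Rightarrow> real \<Rightarrow> (nat \<Rightarrow> real) \<Rightarrow> (nat \<Rightarrow> real) \<Rightarrow> bool" where
  "is_QRE m n Q \<tau> \<mu> \<nu> \<longleftrightarrow>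
     (\<forall>a\<in>{1..m}. \<mu> a = exp ((\<Sum>b=1..n. Q a b * \<nu> b) / \<tau>)
                         / (\<Sum>a'=1..m. exp ((\<Sum>b=1..n. Q a' b * \<nu> b) / \<tau>))) \<and>
     (\<forall>b\<in>{1..n}. \<nu> b = exp (- (\<Sum>a=1..m. Q a b * \<mu> a) / \<tau>)
                         / (\<Sum>b'=1..n. exp (- (\<Sum>a=1..m. Q a b' * \<mu> a) / \<tau>)))"

text \<open>Row r (0-based, r < m+n-2) of X(mu,nu): first the m-1 rows of A(nu), then the n-1 rows of B(mu).\<close>
definition Xrow :: "nat \<Rightarrow> nat \<Rightarrow> (nat \<Rightarrow> nat \<Rightarrow> real^'d) \<Rightarrow> (nat \<Rightarrow> real) \<Rightarrow> (nat \<Rightarrow> real) \<Rightarrow> nat \<Rightarrow> real^'d" where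
  "Xrow m n phi \<mu> \<nu> r =
     (if r < m - 1
      then (\<Sum>b'=1..n. \<nu> b' *\<^sub>R (phi (r + 2) b' - phi 1 b'))
      else (\<Sum>a'=1..m. \<mu> a' *\<^sub>R (phi a' 1 - phi a' (r - (m - 1) + 2))))"

definition yvec :: "nat \<Rightarrow> nat \<Rightarrow> (nat \<Rightarrow> real) \<Rightarrow> (nat \<Rightarrow> real) \<Rightarrow> nat \<Rightarrow> real" where
  "yvec m n \<mu> \<nu> r =
     (if r < m - 1 then ln (\<mu> (r + 2) / \<mu> 1)
      else ln (\<nu> (r - (m - 1) + 2) / \<nu> 1))"

definition rankX :: "nat \<Rightarrow> nat \<Rightarrow> (nat \<Rightarrow> nat \<Rightarrow> real^'d) \<Rightarrow> (nat \<Rightarrow> real) \<Rightarrow> (nat \<Rightarrow> real) \<Rightarrow> nat" where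
  "rankX m n phi \<mu> \<nu> = dim (Xrow m n phi \<mu> \<nu> ` {..<m + n - 2})"

end

theory Submission
  imports Defs
begin

text \<open>
  Taking log-odds against action 1 in the logit fixed-point equations of the QRE turns them into
  the linear system \<open>X\<^sup>* \<theta>\<^sup>* = \<tau>\<^sup>* y\<^sup>*\<close>. If \<open>X\<^sup>*\<close> has full rank, any other unit solution
  \<open>(\<theta>, \<tau>)\<close> satisfies \<open>X\<^sup>* (\<tau>\<^sup>* \<theta> - \<tau> \<theta>\<^sup>*) = 0\<close>, so \<open>\<theta>\<close> is a positive multiple of \<open>\<theta>\<^sup>*\<close> and
  the normalisation forces equality. Conversely, \<open>y\<^sup>* = 0\<close> lets \<open>(\<theta>\<^sup>*, 2\<tau>\<^sup>*)\<close> solve the system,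
  and a nonzero \<open>v\<close> with \<open>X\<^sup>* v = 0\<close> yields a second solution by normalising \<open>\<theta>\<^sup>* + v\<close>,
  which is possible because \<open>y\<^sup>* \<noteq> 0\<close> keeps \<open>\<theta>\<^sup>* + v\<close> away from \<open>0\<close>.
\<close>

lemma is_QRE_row_log_odds:
  assumes "is_QRE m n Q \<tau> \<mu> \<nu>" and "\<tau> \<noteq> 0" and "a \<in> {1..m}"
  shows "\<tau> * ln (\<mu> a / \<mu> 1) = (\<Sum>b=1..n. Q a b * \<nu> b) - (\<Sum>b=1..n. Q 1 b * \<nu> b)"
proof -
  define S where "S a' = (\<Sum>b=1..n. Q a' b * \<nu> b)" for a'
  define Z where "Z = (\<Sum>a'=1..m. exp (S a' / \<tau>))"
  have "Z > 0"
    unfolding Z_def using assms(3) by (intro sum_pos) auto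
  have "\<mu> a' = exp (S a' / \<tau>) / Z" if "a' \<in> {1..m}" for a'
    using assms(1) that unfolding is_QRE_def S_def Z_def by blast
  then have "\<mu> a / \<mu> 1 = exp (S a / \<tau>) / exp (S 1 / \<tau>)"
    using assms(3) \<open>Z > 0\<close> by simp
  then have "ln (\<mu> a / \<mu> 1) = S a / \<tau> - S 1 / \<tau>"
    by (simp add: exp_diff[symmetric])
  then show ?thesis
    using assms(2) by (simp add: S_def field_simps)
qed

lemma is_QRE_col_log_odds:
  assumes "is_QRE m n Q \<tau> \<mu> \<nu>" and "\<tau> \<noteq> 0" and "b \<in> {1..n}"
  shows "\<tau> * ln (\<nu> b / \<nu> 1) = (\<Sum>a=1..m. Q a 1 * \<mu> a) - (\<Sum>a=1..m. Q a b * \<mu> a)"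
proof -
  define S where "S b' = (\<Sum>a=1..m. Q a b' * \<mu> a)" for b'
  define Z where "Z = (\<Sum>b'=1..n. exp (- S b' / \<tau>))"
  have "Z > 0"
    unfolding Z_def using assms(3) by (intro sum_pos) auto
  have "\<nu> b' = exp (- S b' / \<tau>) / Z" if "b' \<in> {1..n}" for b'
    using assms(1) that unfolding is_QRE_def S_def Z_def by blast
  then have "\<nu> b / \<nu> 1 = exp (- S b / \<tau>) / exp (- S 1 / \<tau>)"
    using assms(3) \<open>Z > 0\<close> by simp
  then have "ln (\<nu> b / \<nu> 1) = - S b / \<tau> - (- S 1 / \<tau>)"
    by (simp add: exp_diff[symmetric])
  then show ?thesis
    using assms(2) by (simp add: S_def field_simps)
qed

lemma Xrow_inner:
  "Xrow m n phi \<mu> \<nu> r \<bullet> \<theta> =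
     (if r < m - 1
      then (\<Sum>b=1..n. payoff phi \<theta> (r + 2) b * \<nu> b) - (\<Sum>b=1..n. payoff phi \<theta> 1 b * \<nu> b)
      else (\<Sum>a=1..m. payoff phi \<theta> a 1 * \<mu> a)
           - (\<Sum>a=1..m. payoff phi \<theta> a (r - (m - 1) + 2) * \<mu> a))"
  by (simp add: Xrow_def payoff_def inner_sum_left inner_diff_left
      sum_subtractf[symmetric] algebra_simps)

lemma is_QRE_Xrow_inner_eq:
  assumes "is_QRE m n (payoff phi \<theta>) \<tau> \<mu> \<nu>" and "\<tau> \<noteq> 0" and "r < m + n - 2"
  shows "Xrow m n phi \<mu> \<nu> r \<bullet> \<theta> = \<tau> * yvec m n \<mu> \<nu> r"
proof (cases "r < m - 1")
  case True
  then show ?thesis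
    using is_QRE_row_log_odds[OF assms(1,2), of "r + 2"] by (simp add: Xrow_inner yvec_def)
next
  case False
  then have "r - (m - 1) + 2 \<in> {1..n}"
    using assms(3) by auto
  with False show ?thesis
    using is_QRE_col_log_odds[OF assms(1,2)] by (simp add: Xrow_inner yvec_def)
qed

lemma full_dim_inner_eq_zero:
  fixes x :: "'i \<Rightarrow> 'a::euclidean_space"
  assumes "dim (x ` I) = DIM('a)" and "\<forall>r\<in>I. x r \<bullet> u = 0"
  shows "u = 0"
proof -
  have "orthogonal u u"
  proof (rule orthogonal_to_span)
    show "u \<in> span (x ` I)"
      using assms(1) dim_eq_full by auto
    show "orthogonal u w" if "w \<in> x ` I" for w
      using that assms(2) by (auto simp: orthogonal_def inner_commute)
  qed
  then show ?thesis
    by (simp add: orthogonal_self)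
qed

lemma full_dim_normalized_solution_unique:
  fixes x :: "'i \<Rightarrow> 'a::euclidean_space"
  assumes "dim (x ` I) = DIM('a)"
    and "\<tau>s > 0" "norm \<theta>s = 1" "\<forall>r\<in>I. x r \<bullet> \<theta>s = \<tau>s * y r"
    and "\<tau> > 0" "norm \<theta> = 1" "\<forall>r\<in>I. x r \<bullet> \<theta> = \<tau> * y r"
  shows "\<theta> = \<theta>s \<and> \<tau> = \<tau>s"
proof -
  have "\<forall>r\<in>I. x r \<bullet> (\<tau>s *\<^sub>R \<theta> - \<tau> *\<^sub>R \<theta>s) = 0"
    using assms(4,7) by (simp add: inner_diff_right)
  then have "\<tau>s *\<^sub>R \<theta> - \<tau> *\<^sub>R \<theta>s = 0"
    by (rule full_dim_inner_eq_zero[OF assms(1)])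
  then have parallel: "\<tau>s *\<^sub>R \<theta> = \<tau> *\<^sub>R \<theta>s"
    by simp
  then have "norm (\<tau>s *\<^sub>R \<theta>) = norm (\<tau> *\<^sub>R \<theta>s)"
    by simp
  then have "\<tau> = \<tau>s"
    using assms(2,3,5,6) by simp
  with parallel show ?thesis
    using assms(2) by simp
qed

lemma normalized_solution_unique_imp_full_dim_nonzero:
  fixes x :: "'i \<Rightarrow> 'a::euclidean_space"
  assumes "\<tau>s > 0" "norm \<theta>s = 1" "\<forall>r\<in>I. x r \<bullet> \<theta>s = \<tau>s * y r"
    and unique: "\<forall>\<theta> \<tau>. (\<tau> > 0 \<and> norm \<theta> = 1 \<and> (\<forall>r\<in>I. x r \<bullet> \<theta> = \<tau> * y r))
                   \<longleftrightarrow> (\<theta> = \<theta>s \<and> \<tau> = \<tau>s)"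
  shows "dim (x ` I) = DIM('a) \<and> (\<exists>r\<in>I. y r \<noteq> 0)"
proof
  show "\<exists>r\<in>I. y r \<noteq> 0"
  proof (rule ccontr)
    assume "\<not> (\<exists>r\<in>I. y r \<noteq> 0)"
    then have "\<forall>r\<in>I. x r \<bullet> \<theta>s = (2 * \<tau>s) * y r"
      using assms(3) by simp
    then have "\<theta>s = \<theta>s \<and> 2 * \<tau>s = \<tau>s"
      using unique assms(1,2) by (metis mult_pos_pos zero_less_numeral)
    then show False
      using assms(1) by simp
  qed
  then obtain r0 where "r0 \<in> I" "y r0 \<noteq> 0" ..
  show "dim (x ` I) = DIM('a)"
  proof (rule ccontr)
    assume "dim (x ` I) \<noteq> DIM('a)"
    then have "dim (x ` I) < DIM('a)"
      using dim_subset_UNIV[of "x ` I"] by simp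
    then obtain v where "v \<noteq> 0" and v_orth: "\<And>w. w \<in> span (x ` I) \<Longrightarrow> orthogonal v w"
      using orthogonal_to_subspace_exists by blast
    have x_v: "x r \<bullet> v = 0" if "r \<in> I" for r
      using v_orth[of "x r"] that by (simp add: span_base orthogonal_def inner_commute)
    define w where "w = \<theta>s + v"
    have x_w: "\<forall>r\<in>I. x r \<bullet> w = \<tau>s * y r"
      using assms(3) x_v by (simp add: w_def inner_add_right)
    have "w \<noteq> 0"
      using x_w \<open>r0 \<in> I\<close> \<open>y r0 \<noteq> 0\<close> assms(1) by auto
    then have "norm w > 0"
      by simp
    have "\<tau>s / norm w > 0 \<and> norm (w /\<^sub>R norm w) = 1 \<and>
          (\<forall>r\<in>I. x r \<bullet> (w /\<^sub>R norm w) = (\<tau>s / norm w) * y r)"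
      using x_w \<open>norm w > 0\<close> assms(1) by (simp add: divide_inverse_commute)
    then have "w /\<^sub>R norm w = \<theta>s \<and> \<tau>s / norm w = \<tau>s"
      using unique by blast
    then have "norm w = 1"
      using assms(1) \<open>norm w > 0\<close> by (simp add: divide_eq_eq)
    with \<open>w /\<^sub>R norm w = \<theta>s \<and> _\<close> have "w = \<theta>s"
      by simp
    then show False
      using \<open>v \<noteq> 0\<close> by (simp add: w_def)
  qed
qed

lemma normalized_solution_unique_iff:
  fixes x :: "'i \<Rightarrow> 'a::euclidean_space"
  assumes "\<tau>s > 0" "norm \<theta>s = 1" "\<forall>r\<in>I. x r \<bullet> \<theta>s = \<tau>s * y r"
  shows "(\<forall>\<theta> \<tau>. (\<tau> > 0 \<and> norm \<theta> = 1 \<and> (\<forall>r\<in>I. x r \<bullet> \<theta> = \<tau> * y r))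
                 \<longleftrightarrow> (\<theta> = \<theta>s \<and> \<tau> = \<tau>s))
         \<longleftrightarrow> (dim (x ` I) = DIM('a) \<and> (\<exists>r\<in>I. y r \<noteq> 0))"
  using normalized_solution_unique_imp_full_dim_nonzero[OF assms]
    full_dim_normalized_solution_unique[OF _ assms] assms
  by blast

theorem theorem1:
  fixes m n :: nat and phi :: "nat \<Rightarrow> nat \<Rightarrow> real^'d" and L :: real
    and \<theta>s :: "real^'d" and \<tau>s :: real and \<mu>s \<nu>s :: "nat \<Rightarrow> real"
  assumes "m \<ge> 1" and "n \<ge> 1"
    and "\<forall>a\<in>{1..m}. \<forall>b\<in>{1..n}. norm (phi a b) \<le> L"
    and "norm \<theta>s = 1"
    and "\<tau>s > 0"
    and "is_QRE m n (payoff phi \<theta>s) \<tau>s \<mu>s \<nu>s"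
  shows "(\<forall>\<theta> \<tau>. (\<tau> > 0 \<and> norm \<theta> = 1 \<and>
              (\<forall>r<m + n - 2. Xrow m n phi \<mu>s \<nu>s r \<bullet> \<theta> = \<tau> * yvec m n \<mu>s \<nu>s r))
            \<longleftrightarrow> (\<theta> = \<theta>s \<and> \<tau> = \<tau>s))
         \<longleftrightarrow> (rankX m n phi \<mu>s \<nu>s = CARD('d) \<and> (\<exists>r<m + n - 2. yvec m n \<mu>s \<nu>s r \<noteq> 0))"
proof -
  have "\<forall>r\<in>{..<m + n - 2}. Xrow m n phi \<mu>s \<nu>s r \<bullet> \<theta>s = \<tau>s * yvec m n \<mu>s \<nu>s r"
    using is_QRE_Xrow_inner_eq[OF assms(6)] assms(5) by simp
  from normalized_solution_unique_iff[OF assms(5,4) this] show ?thesis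
    by (simp add: rankX_def lessThan_iff Ball_def Bex_def)
qed

end
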